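(* Let $q\ge2$, $k\in[1:q]$, and let $\mathbf{u}$ be a probability distribution on $[1:q]$ with $|\mathrm{supp}(\mathbf{u})|=k$. Then for all sufficiently large $n$, $$M_{n,\mathbf{u}}(\mathbf{t})\le\frac{2}{n^{(k-1)/2}\sqrt{\prod_{i\in\mathrm{supp}(\mathbf{u})}u_i}}\qquad\forall\mathbf{t}\in\mathcal{N}_{q,n}.$$
   Context: $\mathcal{N}_{q,n}=\{\mathbf{t}\in\mathbb{Z}_{\ge0}^q:\sum_it_i=n\}$; $M_{n,\mathbf{u}}(\mathbf{t})=\frac{n!}{t_1!\cdots t_q!}\prod_iu_i^{t_i}$ (with $0^0=1$); $\mathrm{supp}(\mathbf{u})=\{i:u_i>0\}$. *)

theory Defs
  imports "HOL-Analysis.Analysis"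
begin

definition compositions :: "nat \<Rightarrow> nat \<Rightarrow> (nat \<Rightarrow> nat) set" where
  "compositions q n = {t. (\<forall>i. i \<notin> {1..q} \<longrightarrow> t i = 0) \<and> (\<Sum>i\<in>{1..q}. t i) = n}"

text \<open>Multinomial probability M_{n,u}(t); note 0 ^ 0 = 1 in Isabelle.\<close>
definition multinomial_prob :: "nat \<Rightarrow> nat \<Rightarrow> (nat \<Rightarrow> real) \<Rightarrow> (nat \<Rightarrow> nat) \<Rightarrow> real" where
  "multinomial_prob q n u t =
     fact n / (\<Prod>i\<in>{1..q}. fact (t i)) * (\<Prod>i\<in>{1..q}. u i ^ t i)"

definition supp :: "nat \<Rightarrow> (nat \<Rightarrow> real) \<Rightarrow> nat set" where
  "supp q u = {i\<in>{1..q}. u i > 0}"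

end

theory Submission
  imports Defs "HOL-Real_Asymp.Real_Asymp"
begin

text \<open>
  Stirling-type bounds, obtained from the monotonicity of ln m! - (m + 1/2) ln m + m, give
  n! \<le> e \<surd>n (n/e)^n and m! \<ge> 2 \<surd>m (m/e)^m. Since \<Sum> t_i = n and \<Sum> u_i = 1, the first one
  bounds the multinomial probability by e \<surd>n times the product of the Poisson probabilities
  P_{n u_i}(t_i). A Poisson(\<lambda>) probability is at most 1/\<surd>(2\<lambda>) once \<lambda> is large: for t \<ge> \<lambda>/2
  this is the lower Stirling bound, and for t < \<lambda>/2 the probability is exponentially small.
  Factors off the support are at most 1, so the product is at most (2n)^(-k/2) / \<surd>(\<Prod> u_i),
  and e \<le> 2\<surd>2 absorbs the remaining constant.
\<close>

definition stirling_error :: "nat \<Rightarrow> real" where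
  "stirling_error m = ln (fact m) - (m + 1/2) * ln m + m"

lemma stirling_error_diff_bounds:
  assumes "m \<ge> 1"
  shows "0 \<le> stirling_error m - stirling_error (Suc m)"
    and "stirling_error m - stirling_error (Suc m) \<le> 1 / (4 * real m) - 1 / (4 * real (Suc m))"
proof -
  have m: "real m > 0" using assms by simp
  have diff: "stirling_error m - stirling_error (Suc m) = (m + 1/2) * (ln (real m + 1) - ln m) - 1"
  proof -
    have "ln (fact (Suc m)) = ln (real m + 1) + ln (fact m :: real)"
      by (simp add: ln_mult)
    then show ?thesis by (simp add: stirling_error_def algebra_simps)
  qed
  have "2 * ((real m + 1) - m) / (m + (real m + 1)) \<le> ln (real m + 1) - ln m"
    using m by (intro ln_inverse_approx_ge) auto
  then have "1 \<le> (m + 1/2) * (ln (real m + 1) - ln m)"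
    using m by (simp add: field_simps)
  then show "0 \<le> stirling_error m - stirling_error (Suc m)"
    using diff by simp
  have "ln (real m + 1) - ln m \<le> 1 * (inverse m + inverse (real m + 1)) / 2"
    using m ln_inverse_approx_le[of m 1] by simp
  then have "(m + 1/2) * (ln (real m + 1) - ln m) \<le> (m + 1/2) * ((inverse m + inverse (real m + 1)) / 2)"
    by (intro mult_left_mono) auto
  also have "\<dots> = 1 + (1 / (4 * real m) - 1 / (4 * real (Suc m)))"
    using m by (simp add: divide_simps) (simp add: algebra_simps)
  finally show "stirling_error m - stirling_error (Suc m) \<le> 1 / (4 * real m) - 1 / (4 * real (Suc m))"
    using diff by simp
qed

lemma stirling_error_bounds:
  assumes "m \<ge> 1"
  shows "3/4 + 1 / (4 * m) \<le> stirling_error m \<and> stirling_error m \<le> 1"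
  using assms
proof (induction m rule: nat_induct_at_least)
  case base
  show ?case by (simp add: stirling_error_def)
next
  case (Suc m)
  then show ?case using stirling_error_diff_bounds[OF Suc.hyps] by linarith
qed

lemma fact_eq_exp_stirling_error:
  assumes "m \<ge> 1"
  shows "fact m = exp (stirling_error m) * sqrt m * (m / exp 1) ^ m"
proof -
  have m: "real m > 0" using assms by simp
  have "sqrt m * (m / exp 1) ^ m = exp (ln m / 2) * exp (m * ln m) / exp (m * 1)"
    using m exp_of_nat_mult[of m "1::real"] by (simp add: exp_of_nat_mult power_divide ln_sqrt[symmetric])
  also have "\<dots> = exp ((m + 1/2) * ln m - m)"
    by (simp add: exp_add[symmetric] exp_diff[symmetric] algebra_simps)
  finally have "exp (stirling_error m) * (sqrt m * (m / exp 1) ^ m)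
      = exp (stirling_error m + ((m + 1/2) * ln m - m))"
    by (simp add: exp_add)
  then show ?thesis by (simp add: stirling_error_def mult.assoc)
qed

lemma fact_le_stirling:
  assumes "n \<ge> 1"
  shows "fact n \<le> exp 1 * sqrt n * (n / exp 1) ^ n"
  using stirling_error_bounds[OF assms] fact_eq_exp_stirling_error[OF assms]
  by (simp add: mult_right_mono)

lemma fact_ge_stirling:
  assumes "m \<ge> 1"
  shows "2 * sqrt m * (m / exp 1) ^ m \<le> fact m"
proof -
  have "2 \<le> exp (3/4 :: real)"
    using exp_lower_Taylor_quadratic[of "3/4 :: real"] by (simp add: power2_eq_square)
  also have "\<dots> \<le> exp (stirling_error m)"
  proof -
    have "0 \<le> 1 / (4 * real m)" by simp
    then have "3/4 \<le> stirling_error m" using stirling_error_bounds[OF assms] by linarith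
    then show ?thesis by simp
  qed
  finally show ?thesis
    using fact_eq_exp_stirling_error[OF assms] by (simp add: mult_right_mono)
qed

lemma pow_div_exp_le_fact: "(m / exp 1) ^ m \<le> fact m"
proof (cases "m = 0")
  case False
  then have m: "m \<ge> 1" by simp
  then have "1 \<le> sqrt m" by simp
  then have "1 \<le> 2 * sqrt m" by linarith
  then have "1 * (m / exp 1) ^ m \<le> 2 * sqrt m * (m / exp 1) ^ m"
    by (rule mult_right_mono) simp
  also have "\<dots> \<le> fact m" using fact_ge_stirling[OF m] .
  finally show ?thesis by simp
qed simp

definition poisson_prob :: "real \<Rightarrow> nat \<Rightarrow> real" where
  "poisson_prob a m = a ^ m / fact m * exp (- a)"

lemma power_mult_exp_minus_le:
  assumes a: "0 < a"
  shows "a ^ m * exp (- a) \<le> (m / exp 1) ^ m * exp (- (sqrt a - sqrt m)\<^sup>2)"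
proof (cases "m = 0")
  case True
  then show ?thesis using a by simp
next
  case False
  define r s where "r = sqrt a" and "s = sqrt m"
  have r: "0 < r" "r\<^sup>2 = a" and s: "0 < s" "s\<^sup>2 = m"
    using a False by (auto simp: r_def s_def)
  have "ln (a / m) = ln ((r / s)\<^sup>2)"
    using r s by (simp add: power_divide)
  also have "\<dots> = 2 * ln (r / s)"
    by (simp add: ln_realpow)
  also have "\<dots> \<le> 2 * (r / s - 1)"
    using ln_le_minus_one[of "r / s"] r s by simp
  finally have "m * ln (a / m) \<le> m * (2 * (r / s - 1))"
    by (rule mult_left_mono) simp
  also have "\<dots> = 2 * r * s - 2 * real m"
    unfolding s(2)[symmetric] using s by (simp add: field_simps power2_eq_square)
  finally have log_bound: "m * ln (a / m) \<le> 2 * r * s - 2 * real m" .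
  have "a ^ m = real m ^ m * exp (m * ln (a / m))"
    using a False by (simp add: exp_of_nat_mult power_divide)
  then have "a ^ m * exp (- a) = real m ^ m * exp (m * ln (a / m) - a)"
    by (simp add: exp_diff exp_minus field_simps)
  also have "\<dots> \<le> real m ^ m * exp (2 * r * s - 2 * real m - a)"
    using log_bound by (intro mult_left_mono) auto
  also have "2 * r * s - 2 * real m - a = - real m - (r - s)\<^sup>2"
    using r s by (simp add: power2_eq_square algebra_simps)
  also have "real m ^ m * exp (- real m - (r - s)\<^sup>2) = (m / exp 1) ^ m * exp (- (r - s)\<^sup>2)"
    using exp_of_nat_mult[of m "1::real"]
    by (simp add: exp_diff exp_minus power_divide field_simps)
  finally show ?thesis by (simp add: r_def s_def)
qed

lemma poisson_prob_le_max:
  assumes a: "0 < a"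
  shows "poisson_prob a m \<le> max (exp (- a / 16)) (1 / sqrt (2 * a))"
proof -
  have "poisson_prob a m \<le> (m / exp 1) ^ m / fact m * exp (- (sqrt a - sqrt m)\<^sup>2)"
    using power_mult_exp_minus_le[OF a, of m] unfolding poisson_prob_def
    by (simp add: divide_right_mono)
  also have "\<dots> \<le> max (exp (- a / 16)) (1 / sqrt (2 * a))"
  proof (cases "m < a / 2")
    case True
    have "sqrt m \<le> sqrt (a / 2)" using True by simp
    also have "\<dots> \<le> 3/4 * sqrt a"
    proof -
      have "4/3 \<le> sqrt (2 :: real)" by (rule real_le_rsqrt) (simp add: power2_eq_square)
      then have "4/3 * sqrt a \<le> sqrt 2 * sqrt a" by (rule mult_right_mono) (use a in simp)
      then show ?thesis by (simp add: real_sqrt_divide field_simps)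
    qed
    finally have "(sqrt a / 4)\<^sup>2 \<le> (sqrt a - sqrt m)\<^sup>2"
      using a by (intro power_mono) auto
    then have "a / 16 \<le> (sqrt a - sqrt m)\<^sup>2"
      using a by (simp add: power_divide)
    moreover have "(m / exp 1) ^ m / fact m \<le> 1"
      using pow_div_exp_le_fact[of m] by simp
    ultimately have "(m / exp 1) ^ m / fact m * exp (- (sqrt a - sqrt m)\<^sup>2) \<le> 1 * exp (- a / 16)"
      by (intro mult_mono) auto
    then show ?thesis by simp
  next
    case False
    then have m: "m \<ge> 1" using a by (cases m) auto
    have "(m / exp 1) ^ m / fact m \<le> 1 / (2 * sqrt m)"
      using fact_ge_stirling[OF m] m by (simp add: divide_simps mult.commute)
    also have "\<dots> \<le> 1 / (2 * sqrt (a / 2))"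
      using False a by (intro divide_left_mono mult_left_mono) auto
    also have "2 * sqrt (a / 2) = sqrt (2 * a)"
    proof -
      have "2 * sqrt (a / 2) = sqrt 4 * sqrt (a / 2)" by simp
      also have "\<dots> = sqrt (2 * a)" by (subst real_sqrt_mult[symmetric]) simp
      finally show ?thesis .
    qed
    finally have "(m / exp 1) ^ m / fact m * exp (- (sqrt a - sqrt m)\<^sup>2) \<le> 1 / sqrt (2 * a) * 1"
      using a by (intro mult_mono) auto
    then show ?thesis by simp
  qed
  finally show ?thesis .
qed

lemma eventually_poisson_prob_le:
  "eventually (\<lambda>a. \<forall>m. poisson_prob a m \<le> 1 / sqrt (2 * a)) at_top"
proof -
  have "eventually (\<lambda>a::real. 0 < a) at_top"
    by (rule eventually_gt_at_top)
  moreover have "eventually (\<lambda>a::real. exp (- a / 16) \<le> 1 / sqrt (2 * a)) at_top"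
    by real_asymp
  ultimately show ?thesis
    by eventually_elim (use poisson_prob_le_max in fastforce)
qed

lemma multinomial_prob_le_poisson_prod:
  assumes "\<forall>i\<in>{1..q}. u i \<ge> 0" and "(\<Sum>i\<in>{1..q}. u i) = 1"
    and "t \<in> compositions q n" and n: "n \<ge> 1"
  shows "multinomial_prob q n u t \<le> exp 1 * sqrt n * (\<Prod>i\<in>{1..q}. poisson_prob (real n * u i) (t i))"
proof -
  define I where "I = {1..q}"
  let ?w = "\<lambda>i. u i ^ t i / fact (t i)"
  have u: "\<forall>i\<in>I. u i \<ge> 0" and u_sum: "(\<Sum>i\<in>I. u i) = 1" and t_sum: "(\<Sum>i\<in>I. t i) = n"
    using assms by (simp_all add: I_def compositions_def)
  have "(\<Prod>i\<in>I. poisson_prob (real n * u i) (t i))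
      = (\<Prod>i\<in>I. real n ^ t i) * (\<Prod>i\<in>I. exp (- (real n * u i))) * (\<Prod>i\<in>I. ?w i)"
    by (simp add: poisson_prob_def power_mult_distrib mult_ac flip: prod.distrib)
  also have "(\<Prod>i\<in>I. real n ^ t i) = real n ^ n"
    by (simp add: power_sum[symmetric] t_sum)
  also have "(\<Prod>i\<in>I. exp (- (real n * u i))) = exp (\<Sum>i\<in>I. - (real n * u i))"
    by (simp add: exp_sum I_def)
  also have "\<dots> = exp (- real n)"
    by (simp add: sum_negf sum_distrib_left[symmetric] u_sum)
  also have "real n ^ n * exp (- real n) = (n / exp 1) ^ n"
    using exp_of_nat_mult[of n "1::real"] by (simp add: exp_minus power_divide field_simps)
  finally have poisson_prod:
    "(\<Prod>i\<in>I. poisson_prob (real n * u i) (t i)) = (n / exp 1) ^ n * (\<Prod>i\<in>I. ?w i)" .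
  have "multinomial_prob q n u t = fact n * (\<Prod>i\<in>I. ?w i)"
    by (simp add: multinomial_prob_def prod_dividef I_def)
  also have "\<dots> \<le> exp 1 * sqrt n * (n / exp 1) ^ n * (\<Prod>i\<in>I. ?w i)"
    using u by (intro mult_right_mono fact_le_stirling n prod_nonneg) auto
  finally show ?thesis
    unfolding I_def[symmetric] poisson_prod by (simp add: mult.assoc)
qed

lemma real_sqrt_prod: "sqrt (prod f A) = (\<Prod>x\<in>A. sqrt (f x))"
  by (induction A rule: infinite_finite_induct) (auto simp: real_sqrt_mult)

lemma poisson_prob_nonneg: "0 \<le> a \<Longrightarrow> 0 \<le> poisson_prob a m"
  by (simp add: poisson_prob_def)

lemma prod_poisson_prob_le_supp:
  fixes n :: nat and u :: "nat \<Rightarrow> real" and t :: "nat \<Rightarrow> nat"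
  assumes u: "\<forall>i\<in>{1..q}. u i \<ge> 0"
    and bound: "\<forall>i\<in>supp q u. \<forall>m. poisson_prob (real n * u i) m \<le> 1 / sqrt (2 * (real n * u i))"
  shows "(\<Prod>i\<in>{1..q}. poisson_prob (real n * u i) (t i))
           \<le> 1 / (sqrt (2 * real n) ^ card (supp q u) * sqrt (\<Prod>i\<in>supp q u. u i))"
proof -
  define I S where "I = {1..q}" and "S = supp q u"
  let ?p = "\<lambda>i. poisson_prob (real n * u i) (t i)"
  have S: "S \<subseteq> I" "finite I" and u_S: "\<And>i. i \<in> S \<Longrightarrow> u i > 0"
    and u_I: "\<And>i. i \<in> I \<Longrightarrow> u i \<ge> 0"
    using u by (auto simp: I_def S_def supp_def)
  have u_off: "\<And>i. i \<in> I - S \<Longrightarrow> u i = 0"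
    using u by (force simp: I_def S_def supp_def)
  have "(\<Prod>i\<in>I - S. ?p i) \<le> 1"
    using u_off by (intro prod_le_1) (simp add: poisson_prob_def power_0_left)
  moreover have "(\<Prod>i\<in>S. ?p i) \<le> (\<Prod>i\<in>S. 1 / sqrt (2 * (real n * u i)))"
    using bound u_S by (intro prod_mono conjI poisson_prob_nonneg) (auto simp: S_def less_imp_le)
  ultimately have "(\<Prod>i\<in>I - S. ?p i) * (\<Prod>i\<in>S. ?p i)
      \<le> 1 * (\<Prod>i\<in>S. 1 / sqrt (2 * (real n * u i)))"
    using u_I S by (intro mult_mono prod_nonneg poisson_prob_nonneg) auto
  also have "(\<Prod>i\<in>I - S. ?p i) * (\<Prod>i\<in>S. ?p i) = (\<Prod>i\<in>I. ?p i)"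
    using S by (rule prod.subset_diff[symmetric])
  also have "1 * (\<Prod>i\<in>S. 1 / sqrt (2 * (real n * u i)))
      = 1 / (sqrt (2 * real n) ^ card S * sqrt (\<Prod>i\<in>S. u i))"
    by (simp add: real_sqrt_mult real_sqrt_prod prod.distrib prod_dividef mult.assoc[symmetric])
  finally show ?thesis unfolding I_def S_def .
qed

lemma exp1_sqrt_div_sqrt_power_le:
  fixes x :: real
  assumes x: "0 < x" and k: "1 \<le> k"
  shows "exp 1 * sqrt x / sqrt (2 * x) ^ k \<le> 2 / x powr ((real k - 1) / 2)"
proof -
  have "7/5 \<le> sqrt (2 :: real)" by (rule real_le_rsqrt) (simp add: power2_eq_square)
  moreover have "sqrt 2 \<le> sqrt (2 :: real) ^ k"
    using k by (metis power_one_right power_increasing one_le_numeral real_sqrt_ge_1_iff)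
  ultimately have e: "exp 1 \<le> 2 * sqrt 2 ^ k"
    using e_less_272 by linarith
  have "sqrt x ^ k = sqrt x * x powr ((real k - 1) / 2)"
  proof -
    have "sqrt x ^ k = sqrt x * sqrt x ^ (k - 1)"
      using k by (simp add: power_eq_if)
    also have "sqrt x ^ (k - 1) = x powr ((real k - 1) / 2)"
      using x k by (simp add: powr_half_sqrt[symmetric] powr_powr of_nat_diff powr_realpow[symmetric])
    finally show ?thesis .
  qed
  then have "exp 1 * sqrt x / sqrt (2 * x) ^ k = exp 1 / (sqrt 2 ^ k * x powr ((real k - 1) / 2))"
    using x by (simp add: real_sqrt_mult power_mult_distrib)
  also have "\<dots> \<le> 2 * sqrt 2 ^ k / (sqrt 2 ^ k * x powr ((real k - 1) / 2))"
    using x e by (intro divide_right_mono) auto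
  also have "\<dots> = 2 / x powr ((real k - 1) / 2)"
    by simp
  finally show ?thesis .
qed

lemma eventually_poisson_prob_le_supp:
  fixes u :: "nat \<Rightarrow> real"
  shows "eventually (\<lambda>n. \<forall>i\<in>supp q u. \<forall>m.
           poisson_prob (real n * u i) m \<le> 1 / sqrt (2 * (real n * u i))) sequentially"
proof (rule eventually_ball_finite)
  show "finite (supp q u)" by (simp add: supp_def)
  show "\<forall>i\<in>supp q u. eventually (\<lambda>n. \<forall>m.
          poisson_prob (real n * u i) m \<le> 1 / sqrt (2 * (real n * u i))) sequentially"
  proof
    fix i assume "i \<in> supp q u"
    then have "u i > 0" by (simp add: supp_def)
    then have "filterlim (\<lambda>n. real n * u i) at_top sequentially"
      by real_asymp
    then show "eventually (\<lambda>n. \<forall>m.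
        poisson_prob (real n * u i) m \<le> 1 / sqrt (2 * (real n * u i))) sequentially"
      by (rule eventually_compose_filterlim[OF eventually_poisson_prob_le])
  qed
qed

lemma multinomial_prob_le_if_poisson_prob_bounded:
  fixes n :: nat and u :: "nat \<Rightarrow> real"
  assumes u: "\<forall>i\<in>{1..q}. u i \<ge> 0" and u_sum: "(\<Sum>i\<in>{1..q}. u i) = 1"
    and t: "t \<in> compositions q n" and n: "n \<ge> 1" and k: "card (supp q u) = k" "k \<ge> 1"
    and bound: "\<forall>i\<in>supp q u. \<forall>m. poisson_prob (real n * u i) m \<le> 1 / sqrt (2 * (real n * u i))"
  shows "multinomial_prob q n u t \<le> 2 / (real n powr ((real k - 1) / 2) * sqrt (\<Prod>i\<in>supp q u. u i))"
proof -
  let ?P = "\<Prod>i\<in>supp q u. u i"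
  have "0 \<le> ?P"
    by (rule prod_nonneg) (simp add: supp_def)
  have "multinomial_prob q n u t \<le> exp 1 * sqrt n * (\<Prod>i\<in>{1..q}. poisson_prob (real n * u i) (t i))"
    using multinomial_prob_le_poisson_prod[OF u u_sum t n] .
  also have "\<dots> \<le> exp 1 * sqrt n * (1 / (sqrt (2 * real n) ^ k * sqrt ?P))"
    using prod_poisson_prob_le_supp[OF u bound] unfolding k(1)
    by (rule mult_left_mono) simp
  also have "\<dots> = (exp 1 * sqrt n / sqrt (2 * real n) ^ k) / sqrt ?P"
    by simp
  also have "\<dots> \<le> (2 / real n powr ((real k - 1) / 2)) / sqrt ?P"
    using exp1_sqrt_div_sqrt_power_le[of n k] n k(2) \<open>0 \<le> ?P\<close>
    by (intro divide_right_mono) auto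
  finally show ?thesis by simp
qed

theorem corollary2:
  fixes q k :: nat and u :: "nat \<Rightarrow> real"
  assumes "q \<ge> 2" and "1 \<le> k" and "k \<le> q"
    and "\<forall>i\<in>{1..q}. u i \<ge> 0" and "(\<Sum>i\<in>{1..q}. u i) = 1"
    and "card (supp q u) = k"
  shows "\<exists>N. \<forall>n\<ge>N. \<forall>t\<in>compositions q n.
           multinomial_prob q n u t
             \<le> 2 / (real n powr ((real k - 1) / 2) * sqrt (\<Prod>i\<in>supp q u. u i))"
proof -
  have "eventually (\<lambda>n. n \<ge> 1 \<and>
      (\<forall>i\<in>supp q u. \<forall>m. poisson_prob (real n * u i) m \<le> 1 / sqrt (2 * (real n * u i))))
      sequentially"
    by (intro eventually_conj eventually_ge_at_top eventually_poisson_prob_le_supp)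
  then obtain N where "\<And>n. n \<ge> N \<Longrightarrow> n \<ge> 1 \<and>
      (\<forall>i\<in>supp q u. \<forall>m. poisson_prob (real n * u i) m \<le> 1 / sqrt (2 * (real n * u i)))"
    unfolding eventually_sequentially by blast
  then show ?thesis
    using multinomial_prob_le_if_poisson_prob_bounded[OF assms(4,5) _ _ assms(6,2)] by blast
qed

end
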